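(* Let $\mathcal{A}$ be an $N$-dimensional real associative unital algebra generated by $\varepsilon$, i.e. every $z\in\mathcal{A}$ has the form $z=x_1+x_2\varepsilon+\cdots+x_N\varepsilon^{N-1}$ with $x_1,\dots,x_N\in\mathbb{R}$. Then there exist unique functions $f_1,\dots,f_N:\mathbb{R}\to\mathbb{R}$ such that $e^{\varepsilon t}=f_1(t)+\varepsilon f_2(t)+\cdots+\varepsilon^{N-1}f_N(t)$ for all $t\in\mathbb{R}$. Moreover, for each $i$ there exist real constants $c_{ij}$ with $f_i(t)=\sum_{j=0}^\infty c_{ij}t^j$ for all $t\in\mathbb{R}$ (so each $f_i$ is entire on $\mathbb{R}$), and each $f_i$ extends uniquely to an entire function on $\mathcal{A}$, namely $f_i(z)=\sum_{j=0}^\infty c_{ij}z^j$ for $z\in\mathcal{A}$.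
   Context: The exponential on $\mathcal{A}$ is $e^z=\sum_{n\ge0}z^n/n!$. A function $g:\mathcal{A}\to\mathcal{A}$ is entire if it can be written as a power series $\sum_n b_n z^n$ with $b_n\in\mathcal{A}$ converging for all $z\in\mathcal{A}$. $\mathbb{R}$ is identified with $\mathbb{R}\cdot 1\subseteq\mathcal{A}$; an extension of a real function $f$ is a function on $\mathcal{A}$ whose restriction to $\mathbb{R}$ is $f$. Convergence in $\mathcal{A}$ is with respect to any norm on the finite-dimensional space $\mathcal{A}$. *)

theory Defs
  imports "HOL-Analysis.Analysis"
begin

text \<open>The algebra is modelled as a type that is both a real unital (associative) algebra
and a finite-dimensional Euclidean space (i.e. a finite-dimensional real vector space with
some inner product; every finite-dimensional real vector space admits one, and the induced
topology is the unique norm topology).\<close>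

definition alg_exp :: "'a::{real_algebra_1, euclidean_space} \<Rightarrow> 'a" where
  "alg_exp z = (\<Sum>n. (1 / fact n) *\<^sub>R z ^ n)"

definition entire_alg :: "('a::{real_algebra_1, euclidean_space} \<Rightarrow> 'a) \<Rightarrow> bool" where
  "entire_alg g \<longleftrightarrow> (\<exists>b::nat \<Rightarrow> 'a. \<forall>z. (\<lambda>n. b n * z ^ n) sums g z)"

end

theory Submission
  imports Defs "HOL-Complex_Analysis.Complex_Analysis"
begin

text \<open>Coordinates with respect to the basis \<open>1, \<epsilon>, \<dots>, \<epsilon>\<^sup>N\<^sup>-\<^sup>1\<close> are bounded linear functionals,
so applying them termwise to \<open>e\<^sup>t\<^sup>\<epsilon> = \<Sum>\<^sub>j t\<^sup>j \<epsilon>\<^sup>j / j!\<close> gives the power series of the \<open>f\<^sub>i\<close>, with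
coefficients \<open>c\<^sub>i\<^sub>j\<close> = (\<open>i\<close>-th coordinate of \<open>\<epsilon>\<^sup>j\<close>)\<open>/j!\<close>. These grow at most like \<open>R\<^sup>j/j!\<close>, because
multiplication on a finite-dimensional algebra is bounded bilinear, so the same series converge
at every point of the algebra. An entire function agreeing with \<open>f\<^sub>i\<close> on the reals has its
coefficients fixed by the identity theorem for real power series, applied coordinatewise.\<close>

lemma scaleR_power_real_algebra_1:
  "(x *\<^sub>R (y::'a::real_algebra_1)) ^ n = x ^ n *\<^sub>R y ^ n"
  by (induction n) (simp_all add: mult_scaleR_left mult_scaleR_right)

lemma real_powser_eq_zero:
  fixes a :: "nat \<Rightarrow> real"
  assumes sums_zero: "\<And>t. (\<lambda>n. a n * t ^ n) sums 0"
  shows "a n = 0"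
proof (cases "n = 0")
  case True
  with sums_zero[of 0] show ?thesis by simp
next
  case False
  show ?thesis
  proof (rule ccontr)
    assume "a n \<noteq> 0"
    show False
    proof (rule powser_0_nonzero[of 1 0 a "\<lambda>_. 0" n])
      fix s :: real
      assume "s > 0" and nonzero: "\<And>z::real. z \<in> cball 0 s - {0} \<Longrightarrow> (\<lambda>_. 0::real) z \<noteq> 0"
      from nonzero[of s] \<open>s > 0\<close> show False by simp
    qed (use sums_zero False \<open>a n \<noteq> 0\<close> in auto)
  qed
qed

lemma euclidean_powser_eq_zero:
  fixes d :: "nat \<Rightarrow> 'a::euclidean_space"
  assumes sums_zero: "\<And>t. (\<lambda>n. t ^ n *\<^sub>R d n) sums 0"
  shows "d n = 0"
proof (rule euclidean_eqI)
  fix b :: 'a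
  have "(\<lambda>n. (d n \<bullet> b) * t ^ n) sums 0" for t
    using bounded_linear.sums[OF bounded_linear_inner_left sums_zero[of t], of b]
    by (simp add: mult.commute)
  then have "d n \<bullet> b = 0"
    by (rule real_powser_eq_zero)
  then show "d n \<bullet> b = 0 \<bullet> b"
    by simp
qed

lemma bounded_bilinear_mult_euclidean:
  "bounded_bilinear ((*) :: 'a::{real_algebra, euclidean_space} \<Rightarrow> 'a \<Rightarrow> 'a)"
proof -
  have "bilinear ((*) :: 'a \<Rightarrow> 'a \<Rightarrow> 'a)"
    unfolding bilinear_def by (auto intro!: linearI simp: distrib_left distrib_right)
  then show ?thesis by (simp add: bilinear_conv_bounded_bilinear)
qed

lemma norm_power_le_geometric:
  obtains K :: real where "K > 0"
    and "\<And>(x::'a::{real_algebra_1, euclidean_space}) n. norm (x ^ n) \<le> norm (1::'a) * (K * norm x) ^ n"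
proof -
  obtain K where "K > 0" and K: "\<And>x y::'a. norm (x * y) \<le> norm x * norm y * K"
    using bounded_bilinear.pos_bounded[OF bounded_bilinear_mult_euclidean] by blast
  have "norm (x ^ n) \<le> norm (1::'a) * (K * norm x) ^ n" for x :: 'a and n
  proof (induction n)
    case (Suc n)
    have "norm (x ^ Suc n) \<le> norm x * norm (x ^ n) * K"
      using K by simp
    also have "\<dots> \<le> norm x * (norm (1::'a) * (K * norm x) ^ n) * K"
      using Suc \<open>K > 0\<close> by (intro mult_right_mono mult_left_mono) auto
    also have "\<dots> = norm (1::'a) * (K * norm x) ^ Suc n"
      by (simp add: algebra_simps)
    finally show ?case .
  qed simp
  with \<open>K > 0\<close> show ?thesis by (rule that)
qed

lemma summable_factorial_powser:
  fixes z :: "'a::{real_algebra_1, euclidean_space}"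
  assumes a_bound: "\<And>n. \<bar>a n\<bar> \<le> B * R ^ n"
  shows "summable (\<lambda>n. (a n / fact n) *\<^sub>R z ^ n)"
proof -
  obtain K where K: "\<And>(x::'a) n. norm (x ^ n) \<le> norm (1::'a) * (K * norm x) ^ n"
    using norm_power_le_geometric by blast
  show ?thesis
  proof (rule summable_comparison_test)
    show "summable (\<lambda>n. (B * norm (1::'a)) * (inverse (fact n) * (R * K * norm z) ^ n))"
      by (intro summable_mult summable_exp)
    have "norm ((a n / fact n) *\<^sub>R z ^ n)
        \<le> (B * norm (1::'a)) * (inverse (fact n) * (R * K * norm z) ^ n)" for n
    proof -
      have "\<bar>a n\<bar> * norm (z ^ n) \<le> (B * R ^ n) * (norm (1::'a) * (K * norm z) ^ n)"
        using a_bound[of n] K[of z n] by (intro mult_mono) auto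
      then show ?thesis
        by (simp add: field_simps power_mult_distrib)
    qed
    then show "\<exists>N. \<forall>n\<ge>N. norm ((a n / fact n) *\<^sub>R z ^ n)
        \<le> (B * norm (1::'a)) * (inverse (fact n) * (R * K * norm z) ^ n)"
      by blast
  qed
qed

lemma alg_exp_scaleR_sums:
  fixes \<epsilon> :: "'a::{real_algebra_1, euclidean_space}"
  shows "(\<lambda>n. (t ^ n / fact n) *\<^sub>R \<epsilon> ^ n) sums alg_exp (t *\<^sub>R \<epsilon>)"
proof -
  have "summable (\<lambda>n. (1 / fact n) *\<^sub>R (t *\<^sub>R \<epsilon>) ^ n)"
    using summable_factorial_powser[of "\<lambda>_. 1" 1 1] by simp
  then have "(\<lambda>n. (1 / fact n) *\<^sub>R (t *\<^sub>R \<epsilon>) ^ n) sums alg_exp (t *\<^sub>R \<epsilon>)"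
    unfolding alg_exp_def by (rule summable_sums)
  then show ?thesis
    by (simp add: scaleR_power_real_algebra_1)
qed

lemma of_real_powser_sums:
  assumes "(\<lambda>j. c j * t ^ j) sums s"
  shows "(\<lambda>j. c j *\<^sub>R (of_real t :: 'a::{real_algebra_1, real_normed_vector}) ^ j) sums of_real s"
  using bounded_linear.sums[OF bounded_linear_scaleR_left assms, of "1::'a"]
  by (simp add: of_real_def scaleR_power_real_algebra_1)

lemma entire_alg_extension_unique:
  fixes c :: "nat \<Rightarrow> real" and h :: "'a::{real_algebra_1, euclidean_space} \<Rightarrow> 'a"
  assumes real_sums: "\<And>t. (\<lambda>j. c j * t ^ j) sums F t"
    and summable: "\<And>z::'a. summable (\<lambda>j. c j *\<^sub>R z ^ j)"
  shows "(entire_alg h \<and> (\<forall>t. h (of_real t) = of_real (F t))) \<longleftrightarrow> h = (\<lambda>z. \<Sum>j. c j *\<^sub>R z ^ j)"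
proof
  assume "entire_alg h \<and> (\<forall>t. h (of_real t) = of_real (F t))"
  then obtain b where b: "\<And>z. (\<lambda>n. b n * z ^ n) sums h z"
    and on_reals: "\<And>t. h (of_real t) = of_real (F t)"
    unfolding entire_alg_def by blast
  have "t ^ n *\<^sub>R (b n - of_real (c n)) = b n * of_real t ^ n - c n *\<^sub>R of_real t ^ n" for t n
    by (simp add: of_real_def scaleR_power_real_algebra_1 mult_scaleR_right scaleR_diff_right)
  moreover have "(\<lambda>n. b n * of_real t ^ n - c n *\<^sub>R of_real t ^ n) sums 0" for t
    using sums_diff[OF b[of "of_real t"] of_real_powser_sums[OF real_sums[of t]]] on_reals by simp
  ultimately have "(\<lambda>n. t ^ n *\<^sub>R (b n - of_real (c n))) sums 0" for t
    by simp
  then have b_eq: "b n = of_real (c n)" for n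
    using euclidean_powser_eq_zero by (metis right_minus_eq)
  show "h = (\<lambda>z. \<Sum>j. c j *\<^sub>R z ^ j)"
    using b by (auto simp: b_eq scaleR_conv_of_real sums_iff)
next
  assume h: "h = (\<lambda>z. \<Sum>j. c j *\<^sub>R z ^ j)"
  have "(\<lambda>n. of_real (c n) * z ^ n) sums h z" for z
    using summable_sums[OF summable[of z]] by (simp add: h scaleR_conv_of_real)
  then have "entire_alg h"
    unfolding entire_alg_def by (intro exI[of _ "\<lambda>n. of_real (c n)"]) blast
  moreover have "h (of_real t) = of_real (F t)" for t
    using of_real_powser_sums[OF real_sums[of t], where 'a='a] by (simp add: h sums_iff)
  ultimately show "entire_alg h \<and> (\<forall>t. h (of_real t) = of_real (F t))"
    by blast
qed

locale power_generated_algebra =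
  fixes \<epsilon> :: "'a::{real_algebra_1, euclidean_space}" and N :: nat
  assumes dim: "DIM('a) = N"
    and gen: "\<forall>z::'a. \<exists>x::nat \<Rightarrow> real. z = (\<Sum>i<N. x i *\<^sub>R \<epsilon> ^ i)"
begin

text \<open>\<open>N\<close> powers span an \<open>N\<close>-dimensional space, so they are distinct and linearly independent.\<close>

lemma powers_independent:
  assumes "(\<Sum>i<N. x i *\<^sub>R \<epsilon> ^ i) = 0" and "i < N"
  shows "x i = 0"
proof -
  define S where "S = (\<lambda>i. \<epsilon> ^ i) ` {..<N}"
  have finite_S: "finite S"
    by (simp add: S_def)
  have span: "UNIV \<subseteq> span S"
  proof
    fix z :: 'a
    obtain y where y: "z = (\<Sum>i<N. y i *\<^sub>R \<epsilon> ^ i)"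
      using gen by blast
    show "z \<in> span S"
      unfolding y S_def by (intro span_sum span_scale span_base) auto
  qed
  have "N \<le> card S"
    using dim_le_card[OF span] by (simp add: S_def dim_UNIV dim)
  moreover have "card S \<le> N"
    unfolding S_def by (metis card_image_le card_lessThan finite_lessThan)
  ultimately have card_S: "card S = N"
    by simp
  have indep: "independent S"
    by (rule card_le_dim_spanning[OF _ span finite_S]) (simp_all add: card_S dim_UNIV dim)
  have inj: "inj_on (\<lambda>i. \<epsilon> ^ i) {..<N}"
    by (rule eq_card_imp_inj_on) (use card_S in \<open>auto simp: S_def\<close>)
  define u where "u v = x (the_inv_into {..<N} (\<lambda>i. \<epsilon> ^ i) v)" for v
  have "(\<Sum>v\<in>S. u v *\<^sub>R v) = (\<Sum>i<N. x i *\<^sub>R \<epsilon> ^ i)"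
    unfolding S_def by (subst sum.reindex[OF inj]) (simp add: u_def the_inv_into_f_f[OF inj])
  with assms(1) have "\<forall>v\<in>S. u v = 0"
    using indep dependent_finite[OF finite_S] by auto
  with \<open>i < N\<close> show "x i = 0"
    unfolding S_def u_def using the_inv_into_f_f[OF inj] by auto
qed

lemma power_coeffs_unique:
  assumes "(\<Sum>i<N. x i *\<^sub>R \<epsilon> ^ i) = (\<Sum>i<N. y i *\<^sub>R \<epsilon> ^ i)" and "i < N"
  shows "x i = y i"
proof -
  have "(\<Sum>i<N. (x i - y i) *\<^sub>R \<epsilon> ^ i) = 0"
    using assms(1) by (simp add: scaleR_diff_left sum_subtractf)
  with \<open>i < N\<close> show ?thesis
    using powers_independent by fastforce
qed

definition coord :: "'a \<Rightarrow> nat \<Rightarrow> real" where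
  "coord z = (SOME x. z = (\<Sum>i<N. x i *\<^sub>R \<epsilon> ^ i))"

lemma coord_repr: "z = (\<Sum>i<N. coord z i *\<^sub>R \<epsilon> ^ i)"
proof -
  have "\<exists>x. z = (\<Sum>i<N. x i *\<^sub>R \<epsilon> ^ i)"
    using gen by blast
  then show ?thesis
    unfolding coord_def by (rule someI_ex)
qed

lemma coord_eqI:
  assumes "z = (\<Sum>i<N. x i *\<^sub>R \<epsilon> ^ i)" and "i < N"
  shows "coord z i = x i"
  using power_coeffs_unique[OF _ \<open>i < N\<close>, of "coord z" x] coord_repr[of z] assms(1) by simp

lemma bounded_linear_coord:
  assumes "i < N"
  shows "bounded_linear (\<lambda>z. coord z i)"
proof -
  have "coord (z + w) i = coord z i + coord w i" for z w
  proof (rule coord_eqI[OF _ \<open>i < N\<close>])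
    show "z + w = (\<Sum>i<N. (coord z i + coord w i) *\<^sub>R \<epsilon> ^ i)"
      by (subst coord_repr[of z], subst coord_repr[of w]) (simp add: scaleR_add_left sum.distrib)
  qed
  moreover have "coord (r *\<^sub>R z) i = r * coord z i" for r z
  proof (rule coord_eqI[OF _ \<open>i < N\<close>])
    show "r *\<^sub>R z = (\<Sum>i<N. (r * coord z i) *\<^sub>R \<epsilon> ^ i)"
      by (subst coord_repr[of z]) (simp add: scaleR_sum_right)
  qed
  ultimately show ?thesis
    unfolding linear_conv_bounded_linear[symmetric] by (intro linearI) auto
qed

lemma coord_alg_exp_sums:
  assumes "i < N"
  shows "(\<lambda>j. coord (\<epsilon> ^ j) i / fact j * t ^ j) sums coord (alg_exp (t *\<^sub>R \<epsilon>)) i"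
proof -
  interpret coord_i: bounded_linear "\<lambda>z. coord z i"
    using bounded_linear_coord[OF assms] .
  show ?thesis
    using coord_i.sums[OF alg_exp_scaleR_sums[of t \<epsilon>]] by (simp add: coord_i.scale ac_simps)
qed

lemma summable_coord_powser:
  fixes z :: 'a
  assumes "i < N"
  shows "summable (\<lambda>j. (coord (\<epsilon> ^ j) i / fact j) *\<^sub>R z ^ j)"
proof -
  obtain B where B: "\<And>x. norm (coord x i) \<le> norm x * B" and "B > 0"
    using bounded_linear.pos_bounded[OF bounded_linear_coord[OF assms]] by blast
  obtain K where K: "\<And>(x::'a) n. norm (x ^ n) \<le> norm (1::'a) * (K * norm x) ^ n"
    using norm_power_le_geometric by blast
  have "\<bar>coord (\<epsilon> ^ n) i\<bar> \<le> (B * norm (1::'a)) * (K * norm \<epsilon>) ^ n" for n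
  proof -
    have "\<bar>coord (\<epsilon> ^ n) i\<bar> \<le> norm (\<epsilon> ^ n) * B"
      using B[of "\<epsilon> ^ n"] by simp
    also have "\<dots> \<le> norm (1::'a) * (K * norm \<epsilon>) ^ n * B"
      using K[of \<epsilon> n] \<open>B > 0\<close> by (intro mult_right_mono) auto
    finally show ?thesis
      by (simp add: ac_simps)
  qed
  then show ?thesis
    by (rule summable_factorial_powser)
qed

end

theorem theorem7p3:
  fixes \<epsilon> :: "'a::{real_algebra_1, euclidean_space}" and N :: nat
  assumes dim: "DIM('a) = N"
    and gen: "\<forall>z::'a. \<exists>x::nat \<Rightarrow> real. z = (\<Sum>i<N. x i *\<^sub>R \<epsilon> ^ i)"
  shows "\<exists>f::nat \<Rightarrow> real \<Rightarrow> real.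
           (\<forall>t. alg_exp (t *\<^sub>R \<epsilon>) = (\<Sum>i<N. f i t *\<^sub>R \<epsilon> ^ i))
         \<and> (\<forall>g::nat \<Rightarrow> real \<Rightarrow> real.
              (\<forall>t. alg_exp (t *\<^sub>R \<epsilon>) = (\<Sum>i<N. g i t *\<^sub>R \<epsilon> ^ i)) \<longrightarrow> (\<forall>i<N. g i = f i))
         \<and> (\<forall>i<N. \<exists>c::nat \<Rightarrow> real.
              (\<forall>t. (\<lambda>j. c j * t ^ j) sums f i t)
            \<and> (\<forall>z::'a. summable (\<lambda>j. c j *\<^sub>R z ^ j))
            \<and> (\<forall>h::'a \<Rightarrow> 'a.
                 (entire_alg h \<and> (\<forall>t. h (of_real t) = of_real (f i t)))
                 \<longleftrightarrow> h = (\<lambda>z. \<Sum>j. c j *\<^sub>R z ^ j)))"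
proof -
  interpret power_generated_algebra \<epsilon> N
    using assms by unfold_locales
  define f where "f i t = coord (alg_exp (t *\<^sub>R \<epsilon>)) i" for i t
  define c where "c i j = coord (\<epsilon> ^ j) i / fact j" for i j
  have "alg_exp (t *\<^sub>R \<epsilon>) = (\<Sum>i<N. f i t *\<^sub>R \<epsilon> ^ i)" for t
    unfolding f_def by (rule coord_repr)
  moreover have "g i = f i"
    if "\<forall>t. alg_exp (t *\<^sub>R \<epsilon>) = (\<Sum>i<N. g i t *\<^sub>R \<epsilon> ^ i)" and "i < N" for g i
    using coord_eqI[OF _ \<open>i < N\<close>] that(1) unfolding f_def by auto
  moreover have "\<exists>c::nat \<Rightarrow> real.
      (\<forall>t. (\<lambda>j. c j * t ^ j) sums f i t)
    \<and> (\<forall>z::'a. summable (\<lambda>j. c j *\<^sub>R z ^ j))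
    \<and> (\<forall>h::'a \<Rightarrow> 'a. (entire_alg h \<and> (\<forall>t. h (of_real t) = of_real (f i t)))
         \<longleftrightarrow> h = (\<lambda>z. \<Sum>j. c j *\<^sub>R z ^ j))" if "i < N" for i
  proof (intro exI conjI allI)
    show real_sums: "(\<lambda>j. c i j * t ^ j) sums f i t" for t
      unfolding c_def f_def using coord_alg_exp_sums[OF that] .
    show summable: "summable (\<lambda>j. c i j *\<^sub>R z ^ j)" for z :: 'a
      unfolding c_def using summable_coord_powser[OF that] .
    show "(entire_alg h \<and> (\<forall>t. h (of_real t) = of_real (f i t)))
        \<longleftrightarrow> h = (\<lambda>z. \<Sum>j. c i j *\<^sub>R z ^ j)" for h :: "'a \<Rightarrow> 'a"
      by (rule entire_alg_extension_unique[OF real_sums summable])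
  qed
  ultimately show ?thesis
    by blast
qed

end
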